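(* Let $G$ and $H$ be finite directed graphs without sinks or sources, each having a unique terminal component, $C$ and $C'$ respectively. If $\chi : X_G \to X_H$ is a conjugacy, then $\chi(X_C) = X_{C'}$.
   Context: For a finite directed graph $H$: a vertex is recurrent if there is a path from it to itself; recurrent vertices $v,w$ are equivalent if there are paths from $v$ to $w$ and from $w$ to $v$; the equivalence classes are the components. A component $C$ is terminal if there is no path from a vertex of $C$ to a vertex of another component. $X_H$ is the edge shift of $H$ and $X_C$ the edge shift of the subgraph with vertex set $C$ and all edges of $H$ with both endpoints in $C$. A conjugacy is a shift-commuting homeomorphism. *)

theory Defs
  imports "HOL-Analysis.Analysis"
begin

definition fin_digraph :: "'v set \<Rightarrow> 'e set \<Rightarrow> ('e \<Rightarrow> 'v) \<Rightarrow> ('e \<Rightarrow> 'v) \<Rightarrow> bool" where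
  "fin_digraph V E s t \<longleftrightarrow> finite V \<and> finite E \<and> (\<forall>e\<in>E. s e \<in> V \<and> t e \<in> V)"

definition no_sinks_sources :: "'v set \<Rightarrow> 'e set \<Rightarrow> ('e \<Rightarrow> 'v) \<Rightarrow> ('e \<Rightarrow> 'v) \<Rightarrow> bool" where
  "no_sinks_sources V E s t \<longleftrightarrow> (\<forall>v\<in>V. (\<exists>e\<in>E. s e = v) \<and> (\<exists>e\<in>E. t e = v))"

definition edge_rel :: "'e set \<Rightarrow> ('e \<Rightarrow> 'v) \<Rightarrow> ('e \<Rightarrow> 'v) \<Rightarrow> ('v \<times> 'v) set" where
  "edge_rel E s t = {(s e, t e) | e. e \<in> E}"

definition recurrent :: "'e set \<Rightarrow> ('e \<Rightarrow> 'v) \<Rightarrow> ('e \<Rightarrow> 'v) \<Rightarrow> 'v \<Rightarrow> bool" where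
  "recurrent E s t v \<longleftrightarrow> (v, v) \<in> (edge_rel E s t)\<^sup>+"

definition is_component :: "'e set \<Rightarrow> ('e \<Rightarrow> 'v) \<Rightarrow> ('e \<Rightarrow> 'v) \<Rightarrow> 'v set \<Rightarrow> bool" where
  "is_component E s t C \<longleftrightarrow> (\<exists>v. recurrent E s t v \<and>
     C = {w. recurrent E s t w \<and> (v, w) \<in> (edge_rel E s t)\<^sup>+ \<and> (w, v) \<in> (edge_rel E s t)\<^sup>+})"

definition terminal_component :: "'e set \<Rightarrow> ('e \<Rightarrow> 'v) \<Rightarrow> ('e \<Rightarrow> 'v) \<Rightarrow> 'v set \<Rightarrow> bool" where
  "terminal_component E s t C \<longleftrightarrow> is_component E s t C \<and>
     (\<forall>D. is_component E s t D \<and> D \<noteq> C \<longrightarrow>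
        (\<forall>v\<in>C. \<forall>w\<in>D. (v, w) \<notin> (edge_rel E s t)\<^sup>+))"

definition sub_edges :: "'e set \<Rightarrow> ('e \<Rightarrow> 'v) \<Rightarrow> ('e \<Rightarrow> 'v) \<Rightarrow> 'v set \<Rightarrow> 'e set" where
  "sub_edges E s t C = {e \<in> E. s e \<in> C \<and> t e \<in> C}"

definition edge_shift :: "'e set \<Rightarrow> ('e \<Rightarrow> 'v) \<Rightarrow> ('e \<Rightarrow> 'v) \<Rightarrow> (int \<Rightarrow> 'e) set" where
  "edge_shift E s t = {x. \<forall>i. x i \<in> E \<and> t (x i) = s (x (i + 1))}"

definition shift :: "(int \<Rightarrow> 'a) \<Rightarrow> (int \<Rightarrow> 'a)" where
  "shift x = (\<lambda>i. x (i + 1))"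

definition shift_topology :: "'e set \<Rightarrow> ('e \<Rightarrow> 'v) \<Rightarrow> ('e \<Rightarrow> 'v) \<Rightarrow> (int \<Rightarrow> 'e) topology" where
  "shift_topology E s t = subtopology (product_topology (\<lambda>_::int. discrete_topology E) UNIV) (edge_shift E s t)"

definition conjugacy ::
  "'e set \<Rightarrow> ('e \<Rightarrow> 'v) \<Rightarrow> ('e \<Rightarrow> 'v) \<Rightarrow> 'f set \<Rightarrow> ('f \<Rightarrow> 'w) \<Rightarrow> ('f \<Rightarrow> 'w) \<Rightarrow> ((int \<Rightarrow> 'e) \<Rightarrow> (int \<Rightarrow> 'f)) \<Rightarrow> bool" where
  "conjugacy E s t F s' t' \<phi> \<longleftrightarrow>
     homeomorphic_map (shift_topology E s t) (shift_topology F s' t') \<phi> \<and>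
     (\<forall>x\<in>edge_shift E s t. \<phi> (shift x) = shift (\<phi> x))"

end

theory Submission
  imports Defs
begin

(* For a unique terminal component C, the edge shift X_C is determined by the dynamics alone: call a
   nonempty closed shift-invariant set Y saturated if it contains every point whose alpha-limit set
   meets Y. Then X_C is the least saturated set. It is saturated because C is forward closed, so a
   point whose remote past keeps entering C lies entirely in C. It lies in every saturated Y because
   every vertex reaches C: the past of a point y of Y can be joined by a path to an arbitrarily long
   central block of any point x of X_C. The glued point has the alpha-limit set of y, which meets Y
   by compactness, so it lies in Y; its shifts therefore approximate x within Y, and Y is closed.
   Conjugacies carry saturated sets to saturated sets, hence X_C onto X_C'. *)

section \<open>Components of a finite digraph\<close>

definition component_of :: "'e set \<Rightarrow> ('e \<Rightarrow> 'v) \<Rightarrow> ('e \<Rightarrow> 'v) \<Rightarrow> 'v \<Rightarrow> 'v set" where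
  "component_of E s t v =
     {w. recurrent E s t w \<and> (v, w) \<in> (edge_rel E s t)\<^sup>+ \<and> (w, v) \<in> (edge_rel E s t)\<^sup>+}"

lemma is_component_iff: "is_component E s t C \<longleftrightarrow> (\<exists>v. recurrent E s t v \<and> C = component_of E s t v)"
  unfolding is_component_def component_of_def ..

lemma edge_relI: "e \<in> E \<Longrightarrow> (s e, t e) \<in> edge_rel E s t"
  unfolding edge_rel_def by blast

lemma edge_relE:
  assumes "(a, b) \<in> edge_rel E s t"
  obtains e where "e \<in> E" "a = s e" "b = t e"
  using assms unfolding edge_rel_def by blast

lemma rtrancl_edge_rel_in_vertices:
  assumes "fin_digraph V E s t" "(a, b) \<in> (edge_rel E s t)\<^sup>*" "a \<in> V"
  shows "b \<in> V"
  using assms(2,3) by (induction rule: rtrancl_induct)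
    (use assms(1) in \<open>auto simp: fin_digraph_def elim: edge_relE\<close>)

lemma component_of_self: "recurrent E s t v \<Longrightarrow> v \<in> component_of E s t v"
  unfolding component_of_def recurrent_def by simp

lemma component_of_eq:
  assumes "(a, b) \<in> (edge_rel E s t)\<^sup>+" "(b, a) \<in> (edge_rel E s t)\<^sup>+"
  shows "component_of E s t a = component_of E s t b"
  unfolding component_of_def using assms by (auto intro: trancl_trans)

lemma component_of_trancl:
  "v \<in> component_of E s t c \<Longrightarrow> w \<in> component_of E s t c \<Longrightarrow> (v, w) \<in> (edge_rel E s t)\<^sup>+"
  unfolding component_of_def by (auto intro: trancl_trans)

lemma component_of_between:
  assumes "v \<in> component_of E s t c" "(v, w) \<in> (edge_rel E s t)\<^sup>*" "(w, v) \<in> (edge_rel E s t)\<^sup>*"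
  shows "w \<in> component_of E s t c"
proof -
  let ?R = "edge_rel E s t"
  have "(c, w) \<in> ?R\<^sup>+" using assms(1,2) unfolding component_of_def by (auto intro: trancl_rtrancl_trancl)
  moreover have "(w, c) \<in> ?R\<^sup>+" using assms(1,3) unfolding component_of_def by (auto intro: rtrancl_trancl_trancl)
  ultimately show ?thesis unfolding component_of_def recurrent_def by (auto intro: trancl_trans)
qed

lemma component_out_edge:
  assumes "is_component E s t C" "v \<in> C"
  shows "\<exists>e\<in>sub_edges E s t C. s e = v"
proof -
  let ?R = "edge_rel E s t"
  obtain c where C: "C = component_of E s t c" using assms(1) unfolding is_component_iff by auto
  have "(v, v) \<in> ?R\<^sup>+" using assms(2) unfolding C component_of_def recurrent_def by simp
  from tranclD[OF this] obtain d where vd: "(v, d) \<in> ?R" and dv: "(d, v) \<in> ?R\<^sup>*" by blast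
  have "d \<in> C" using component_of_between[OF assms(2)[unfolded C] r_into_rtrancl[OF vd] dv] C by simp
  obtain e where "e \<in> E" "v = s e" "d = t e" using vd by (rule edge_relE)
  with assms(2) \<open>d \<in> C\<close> have "e \<in> sub_edges E s t C" unfolding sub_edges_def by simp
  then show ?thesis using \<open>v = s e\<close> by auto
qed

lemma component_in_edge:
  assumes "is_component E s t C" "v \<in> C"
  shows "\<exists>e\<in>sub_edges E s t C. t e = v"
proof -
  let ?R = "edge_rel E s t"
  obtain c where C: "C = component_of E s t c" using assms(1) unfolding is_component_iff by auto
  have "(v, v) \<in> ?R\<^sup>+" using assms(2) unfolding C component_of_def recurrent_def by simp
  from tranclD2[OF this] obtain d where vd: "(v, d) \<in> ?R\<^sup>*" and dv: "(d, v) \<in> ?R" by blast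
  have "d \<in> C" using component_of_between[OF assms(2)[unfolded C] vd r_into_rtrancl[OF dv]] C by simp
  obtain e where "e \<in> E" "d = s e" "v = t e" using dv by (rule edge_relE)
  with assms(2) \<open>d \<in> C\<close> have "e \<in> sub_edges E s t C" unfolding sub_edges_def by simp
  then show ?thesis using \<open>v = t e\<close> by auto
qed

text \<open>Take u reachable from w with the fewest reachable vertices: whatever is reachable from u has
  a reachable set contained in that of u, hence equal to it, so it reaches u.\<close>
lemma reaches_bottom_vertex:
  assumes "fin_digraph V E s t"
  obtains u where "(w, u) \<in> (edge_rel E s t)\<^sup>*"
    and "\<And>x. (u, x) \<in> (edge_rel E s t)\<^sup>* \<Longrightarrow> (x, u) \<in> (edge_rel E s t)\<^sup>*"
proof -
  let ?R = "edge_rel E s t"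
  have "?R\<^sup>* `` {v} \<subseteq> insert v V" for v
  proof
    fix x assume "x \<in> ?R\<^sup>* `` {v}"
    then have "(v, x) \<in> ?R\<^sup>*" by simp
    then show "x \<in> insert v V"
    proof (cases rule: rtranclE)
      case (step y)
      then obtain e where "e \<in> E" "x = t e" by (elim edge_relE) simp
      then show ?thesis using assms unfolding fin_digraph_def by simp
    qed simp
  qed
  then have finite_reach: "finite (?R\<^sup>* `` {v})" for v
    using assms unfolding fin_digraph_def by (meson finite_insert finite_subset)
  have "\<exists>u. (w, u) \<in> ?R\<^sup>* \<and> (\<forall>x. (w, x) \<in> ?R\<^sup>* \<longrightarrow> card (?R\<^sup>* `` {u}) \<le> card (?R\<^sup>* `` {x}))"
    by (rule ex_has_least_nat[where k = w]) simp
  then obtain u where wu: "(w, u) \<in> ?R\<^sup>*"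
    and least: "\<And>x. (w, x) \<in> ?R\<^sup>* \<Longrightarrow> card (?R\<^sup>* `` {u}) \<le> card (?R\<^sup>* `` {x})"
    by blast
  have bottom: "(x, u) \<in> ?R\<^sup>*" if ux: "(u, x) \<in> ?R\<^sup>*" for x
  proof -
    have sub: "?R\<^sup>* `` {x} \<subseteq> ?R\<^sup>* `` {u}"
      using rtrancl_trans[OF ux] by blast
    have "card (?R\<^sup>* `` {u}) \<le> card (?R\<^sup>* `` {x})"
      using least rtrancl_trans[OF wu ux] .
    with card_mono[OF finite_reach sub] have "card (?R\<^sup>* `` {x}) = card (?R\<^sup>* `` {u})"
      by linarith
    then have "?R\<^sup>* `` {x} = ?R\<^sup>* `` {u}" by (rule card_subset_eq[OF finite_reach sub])
    then have "u \<in> ?R\<^sup>* `` {x}" by simp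
    then show ?thesis by simp
  qed
  show thesis using wu bottom by (rule that)
qed

lemma bottom_vertex_recurrent:
  assumes "no_sinks_sources V E s t" "u \<in> V"
    and bottom: "\<And>x. (u, x) \<in> (edge_rel E s t)\<^sup>* \<Longrightarrow> (x, u) \<in> (edge_rel E s t)\<^sup>*"
  shows "recurrent E s t u"
proof -
  obtain e where e: "e \<in> E" "s e = u" using assms(1,2) unfolding no_sinks_sources_def by auto
  then have ut: "(u, t e) \<in> edge_rel E s t" using edge_relI[of e E s t] by simp
  have "(t e, u) \<in> (edge_rel E s t)\<^sup>*" by (rule bottom) (rule r_into_rtrancl[OF ut])
  then show ?thesis unfolding recurrent_def by (rule rtrancl_into_trancl2[OF ut])
qed

lemma terminal_componentD:
  assumes "terminal_component E s t C" "is_component E s t D" "D \<noteq> C" "v \<in> C" "w \<in> D"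
  shows "(v, w) \<notin> (edge_rel E s t)\<^sup>+"
  using assms unfolding terminal_component_def by blast

lemma terminal_component_of_bottom:
  assumes rec: "recurrent E s t u"
    and bottom: "\<And>x. (u, x) \<in> (edge_rel E s t)\<^sup>* \<Longrightarrow> (x, u) \<in> (edge_rel E s t)\<^sup>*"
  shows "terminal_component E s t (component_of E s t u)"
  unfolding terminal_component_def
proof (intro conjI allI impI ballI notI)
  let ?R = "edge_rel E s t"
  show "is_component E s t (component_of E s t u)" using rec unfolding is_component_iff by auto
  fix D v x assume D: "is_component E s t D \<and> D \<noteq> component_of E s t u"
    and v: "v \<in> component_of E s t u" and x: "x \<in> D" and vx: "(v, x) \<in> ?R\<^sup>+"
  obtain c where c: "D = component_of E s t c" using D unfolding is_component_iff by auto
  have "(u, v) \<in> ?R\<^sup>+" using v unfolding component_of_def by simp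
  then have ux: "(u, x) \<in> ?R\<^sup>+" using vx by (rule trancl_trans)
  have cx: "(c, x) \<in> ?R\<^sup>+" and xc: "(x, c) \<in> ?R\<^sup>+" and xx: "(x, x) \<in> ?R\<^sup>+"
    using x unfolding c component_of_def recurrent_def by simp_all
  have xu: "(x, u) \<in> ?R\<^sup>+" using trancl_rtrancl_trancl[OF xx bottom[OF trancl_into_rtrancl[OF ux]]] .
  have "D = component_of E s t x" unfolding c using component_of_eq[OF cx xc] .
  also have "\<dots> = component_of E s t u" using component_of_eq[OF xu ux] .
  finally show False using D by simp
qed

lemma terminal_component_absorbs_recurrent:
  assumes "terminal_component E s t C" "v \<in> C" "(v, u) \<in> (edge_rel E s t)\<^sup>+" "recurrent E s t u"
  shows "u \<in> C"
proof -
  have comp: "is_component E s t (component_of E s t u)" using assms(4) unfolding is_component_iff by auto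
  have "component_of E s t u = C"
  proof (rule ccontr)
    assume "component_of E s t u \<noteq> C"
    from terminal_componentD[OF assms(1) comp this assms(2) component_of_self[OF assms(4)]] assms(3)
    show False by contradiction
  qed
  then show ?thesis using component_of_self[OF assms(4)] by simp
qed

lemma terminal_component_forward_closed:
  assumes "fin_digraph V E s t" "no_sinks_sources V E s t" "terminal_component E s t C"
    and "v \<in> C" "(v, w) \<in> edge_rel E s t"
  shows "w \<in> C"
proof -
  let ?R = "edge_rel E s t"
  obtain c where C: "C = component_of E s t c"
    using assms(3) unfolding terminal_component_def is_component_iff by auto
  obtain e where "e \<in> E" "w = t e" using assms(5) by (rule edge_relE)
  then have "w \<in> V" using assms(1) unfolding fin_digraph_def by simp
  obtain u where wu: "(w, u) \<in> ?R\<^sup>*" and bottom: "\<And>x. (u, x) \<in> ?R\<^sup>* \<Longrightarrow> (x, u) \<in> ?R\<^sup>*"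
    using reaches_bottom_vertex[OF assms(1), of w] by blast
  have "recurrent E s t u"
    using assms(2) rtrancl_edge_rel_in_vertices[OF assms(1) wu \<open>w \<in> V\<close>] bottom
    by (rule bottom_vertex_recurrent)
  with assms(3,4) rtrancl_into_trancl2[OF assms(5) wu] have "u \<in> C"
    by (rule terminal_component_absorbs_recurrent)
  then have "(u, v) \<in> ?R\<^sup>+" using assms(4) unfolding C by (rule component_of_trancl)
  then have "(w, v) \<in> ?R\<^sup>*" using wu by (meson rtrancl_trans trancl_into_rtrancl)
  then show ?thesis
    unfolding C by (rule component_of_between[OF assms(4)[unfolded C] r_into_rtrancl[OF assms(5)]])
qed

lemma reaches_unique_terminal_component:
  assumes "fin_digraph V E s t" "no_sinks_sources V E s t"
    and "\<forall>D. terminal_component E s t D \<longrightarrow> D = C" and "w \<in> V"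
  shows "\<exists>c\<in>C. (w, c) \<in> (edge_rel E s t)\<^sup>*"
proof -
  obtain u where wu: "(w, u) \<in> (edge_rel E s t)\<^sup>*"
    and bottom: "\<And>x. (u, x) \<in> (edge_rel E s t)\<^sup>* \<Longrightarrow> (x, u) \<in> (edge_rel E s t)\<^sup>*"
    using reaches_bottom_vertex[OF assms(1), of w] by blast
  have rec: "recurrent E s t u"
    using assms(2) rtrancl_edge_rel_in_vertices[OF assms(1) wu assms(4)] bottom
    by (rule bottom_vertex_recurrent)
  have "component_of E s t u = C"
    using assms(3) terminal_component_of_bottom[OF rec bottom] by simp
  then show ?thesis using wu component_of_self[OF rec] by auto
qed

section \<open>Gluing paths in edge shifts\<close>

definition shift_by :: "int \<Rightarrow> (int \<Rightarrow> 'a) \<Rightarrow> (int \<Rightarrow> 'a)" where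
  "shift_by k x = (\<lambda>i. x (i + k))"

lemma shift_by_apply: "shift_by k x i = x (i + k)"
  unfolding shift_by_def ..

lemma shift_by_0 [simp]: "shift_by 0 x = x"
  unfolding shift_by_def by simp

lemma shift_by_shift_by [simp]: "shift_by k (shift_by l x) = shift_by (k + l) x"
  unfolding shift_by_def by (simp add: ac_simps)

lemma shift_eq_shift_by: "shift x = shift_by 1 x"
  unfolding shift_def shift_by_def ..

lemma edge_shift_iff: "x \<in> edge_shift E s t \<longleftrightarrow> (\<forall>i. x i \<in> E \<and> t (x i) = s (x (i + 1)))"
  unfolding edge_shift_def by simp

lemma shift_by_in_edge_shift: "x \<in> edge_shift E s t \<Longrightarrow> shift_by k x \<in> edge_shift E s t"
  unfolding edge_shift_iff shift_by_apply by (simp add: algebra_simps)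

lemma edge_shift_mono: "S \<subseteq> E \<Longrightarrow> edge_shift S s t \<subseteq> edge_shift E s t"
  unfolding edge_shift_def by blast

lemma sub_edges_subset: "sub_edges E s t C \<subseteq> E"
  unfolding sub_edges_def by blast

lemma sub_edge_shift_subset: "edge_shift (sub_edges E s t C) s t \<subseteq> edge_shift E s t"
  by (rule edge_shift_mono[OF sub_edges_subset])

lemma edge_shift_append:
  assumes "y \<in> edge_shift E s t" "x \<in> edge_shift E s t" "t (y k) = s (x 0)"
  shows "(\<lambda>i. if i \<le> k then y i else x (i - k - 1)) \<in> edge_shift E s t"
  unfolding edge_shift_iff
proof
  fix i
  consider "i < k" | "i = k" | "k < i" by linarith
  then show "(if i \<le> k then y i else x (i - k - 1)) \<in> E \<and>
      t (if i \<le> k then y i else x (i - k - 1)) = s (if i + 1 \<le> k then y (i + 1) else x (i + 1 - k - 1))"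
    by cases (use assms in \<open>auto simp: edge_shift_iff algebra_simps\<close>)
qed

lemma edge_shift_through_edge:
  assumes "e0 \<in> S" and succ: "\<forall>e\<in>S. \<exists>e'\<in>S. s e' = t e" and pred: "\<forall>e\<in>S. \<exists>e'\<in>S. t e' = s e"
  obtains x where "x \<in> edge_shift S s t" "x 0 = e0"
proof -
  define nxt where "nxt e = (SOME e'. e' \<in> S \<and> s e' = t e)" for e
  define prv where "prv e = (SOME e'. e' \<in> S \<and> t e' = s e)" for e
  have nxt: "nxt e \<in> S \<and> s (nxt e) = t e" if "e \<in> S" for e
    unfolding nxt_def using succ that by (metis (mono_tags, lifting) someI_ex)
  have prv: "prv e \<in> S \<and> t (prv e) = s e" if "e \<in> S" for e
    unfolding prv_def using pred that by (metis (mono_tags, lifting) someI_ex)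
  have fwd: "(nxt ^^ n) e0 \<in> S" and bwd: "(prv ^^ n) e0 \<in> S" for n
    by (induction n) (use assms(1) nxt prv in auto)
  define x where "x i = (if 0 \<le> i then (nxt ^^ nat i) e0 else (prv ^^ nat (- i)) e0)" for i
  have "x i \<in> S \<and> t (x i) = s (x (i + 1))" for i
  proof (cases "0 \<le> i")
    case True
    then have "x (i + 1) = nxt (x i)" unfolding x_def by (simp add: nat_add_distrib)
    then show ?thesis using nxt[of "x i"] True fwd unfolding x_def by simp
  next
    case False
    have "x (i + 1) = (prv ^^ nat (- (i + 1))) e0" using False unfolding x_def by auto
    moreover have "nat (- i) = Suc (nat (- (i + 1)))" using False by (simp add: nat_eq_iff)
    ultimately have "x i = prv (x (i + 1))" using False unfolding x_def by simp
    moreover have "x (i + 1) \<in> S" using fwd bwd unfolding x_def by simp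
    ultimately show ?thesis using prv[of "x (i + 1)"] by simp
  qed
  then have "x \<in> edge_shift S s t" unfolding edge_shift_iff by simp
  moreover have "x 0 = e0" unfolding x_def by simp
  ultimately show thesis by (rule that)
qed

lemma edge_shift_through_graph_edge:
  assumes "fin_digraph V E s t" "no_sinks_sources V E s t" "e \<in> E"
  obtains x where "x \<in> edge_shift E s t" "x 0 = e"
proof (rule edge_shift_through_edge[OF assms(3)])
  show "\<forall>e\<in>E. \<exists>e'\<in>E. s e' = t e" "\<forall>e\<in>E. \<exists>e'\<in>E. t e' = s e"
    using assms(1,2) unfolding fin_digraph_def no_sinks_sources_def by metis+
qed

lemma component_edge_shift_nonempty:
  assumes "is_component E s t C"
  shows "edge_shift (sub_edges E s t C) s t \<noteq> {}"
proof -
  obtain c where "recurrent E s t c" "C = component_of E s t c"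
    using assms unfolding is_component_iff by auto
  then have "c \<in> C" using component_of_self by simp
  then obtain e0 where "e0 \<in> sub_edges E s t C" using component_out_edge[OF assms] by auto
  moreover have "\<forall>e\<in>sub_edges E s t C. \<exists>e'\<in>sub_edges E s t C. s e' = t e"
    using component_out_edge[OF assms] unfolding sub_edges_def by simp
  moreover have "\<forall>e\<in>sub_edges E s t C. \<exists>e'\<in>sub_edges E s t C. t e' = s e"
    using component_in_edge[OF assms] unfolding sub_edges_def by simp
  ultimately obtain x where "x \<in> edge_shift (sub_edges E s t C) s t"
    by (rule edge_shift_through_edge)
  then show ?thesis by auto
qed

lemma edge_shift_extend_along_path:
  assumes "fin_digraph V E s t" "no_sinks_sources V E s t"
    and "(a, b) \<in> (edge_rel E s t)\<^sup>*" "y \<in> edge_shift E s t" "t (y 0) = a"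
  shows "\<exists>z\<in>edge_shift E s t. \<exists>k\<ge>0. (\<forall>i\<le>0. z i = y i) \<and> t (z k) = b"
  using assms(3)
proof (induction rule: rtrancl_induct)
  case base
  then show ?case using assms(4,5) by (intro bexI[of _ y] exI[of _ 0]) auto
next
  case (step b c)
  then obtain z k where z: "z \<in> edge_shift E s t" "k \<ge> 0" "\<forall>i\<le>0. z i = y i" "t (z k) = b" by blast
  obtain e where e: "e \<in> E" "b = s e" "c = t e" using step.hyps(2) by (rule edge_relE)
  obtain x where x: "x \<in> edge_shift E s t" "x 0 = e"
    using edge_shift_through_graph_edge[OF assms(1,2) e(1)] by blast
  let ?z = "\<lambda>i. if i \<le> k then z i else x (i - k - 1)"
  have "?z \<in> edge_shift E s t" using z(4) x(2) e(2) by (intro edge_shift_append[OF z(1) x(1)]) simp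
  moreover have "\<forall>i\<le>0. ?z i = y i" "t (?z (k + 1)) = c" using z(2,3) x(2) e(3) by simp_all
  ultimately show ?case using z(2) by (intro bexI[of _ ?z] exI[of _ "k + 1"]) simp_all
qed

lemma edge_shift_connect:
  assumes "fin_digraph V E s t" "no_sinks_sources V E s t"
    and "y \<in> edge_shift E s t" "x \<in> edge_shift E s t" "(t (y 0), s (x 0)) \<in> (edge_rel E s t)\<^sup>*"
  obtains z k where "z \<in> edge_shift E s t" "k \<ge> 0" "\<forall>i\<le>0. z i = y i" "\<forall>i\<ge>0. z (i + k + 1) = x i"
proof -
  obtain z k where z: "z \<in> edge_shift E s t" "k \<ge> 0" "\<forall>i\<le>0. z i = y i" "t (z k) = s (x 0)"
    using edge_shift_extend_along_path[OF assms(1,2,5,3)] by blast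
  let ?z = "\<lambda>i. if i \<le> k then z i else x (i - k - 1)"
  have "?z \<in> edge_shift E s t" using edge_shift_append[OF z(1) assms(4) z(4)] .
  moreover have "\<forall>i\<le>0. ?z i = y i" "\<forall>i\<ge>0. ?z (i + k + 1) = x i" using z(2,3) by simp_all
  ultimately show thesis by (rule that[OF _ z(2)])
qed

section \<open>Topology of edge shifts\<close>

lemma topspace_shift_topology [simp]: "topspace (shift_topology E s t) = edge_shift E s t"
  unfolding shift_topology_def edge_shift_def by (auto simp: PiE_iff)

lemma openin_product_discrete_coordinates:
  assumes "finite K" "\<And>i. i \<in> K \<Longrightarrow> A i \<subseteq> E"
  shows "openin (product_topology (\<lambda>_::int. discrete_topology E) UNIV)
           {u \<in> PiE UNIV (\<lambda>_. E). \<forall>i\<in>K. u i \<in> A i}"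
proof -
  have eq: "{u \<in> PiE UNIV (\<lambda>_. E). \<forall>i\<in>K. u i \<in> A i} = PiE UNIV (\<lambda>i. if i \<in> K then A i else E)"
  proof (rule set_eqI)
    fix x
    show "x \<in> {u \<in> PiE UNIV (\<lambda>_. E). \<forall>i\<in>K. u i \<in> A i} \<longleftrightarrow> x \<in> PiE UNIV (\<lambda>i. if i \<in> K then A i else E)"
      unfolding PiE_UNIV_domain using assms(2) by (simp add: Pi_iff) (metis subsetD)
  qed
  have "finite {i. (if i \<in> K then A i else E) \<noteq> E}"
    by (rule finite_subset[OF _ assms(1)]) auto
  then show ?thesis unfolding eq openin_PiE_gen using assms(2) by auto
qed

lemma openin_shift_topology_coordinates:
  assumes "finite K" "\<And>i. i \<in> K \<Longrightarrow> A i \<subseteq> E"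
  shows "openin (shift_topology E s t) {u \<in> edge_shift E s t. \<forall>i\<in>K. u i \<in> A i}"
proof -
  have "{u \<in> edge_shift E s t. \<forall>i\<in>K. u i \<in> A i} =
      {u \<in> PiE UNIV (\<lambda>_. E). \<forall>i\<in>K. u i \<in> A i} \<inter> edge_shift E s t"
    unfolding edge_shift_def PiE_UNIV_domain by auto
  then show ?thesis
    unfolding shift_topology_def openin_subtopology
    using openin_product_discrete_coordinates[OF assms] by (intro exI conjI)
qed

definition cylinder :: "'e set \<Rightarrow> ('e \<Rightarrow> 'v) \<Rightarrow> ('e \<Rightarrow> 'v) \<Rightarrow> (int \<Rightarrow> 'e) \<Rightarrow> nat \<Rightarrow> (int \<Rightarrow> 'e) set" where
  "cylinder E s t x N = {u \<in> edge_shift E s t. \<forall>i. \<bar>i\<bar> \<le> int N \<longrightarrow> u i = x i}"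

lemma self_in_cylinder: "x \<in> edge_shift E s t \<Longrightarrow> x \<in> cylinder E s t x N"
  unfolding cylinder_def by simp

lemma openin_cylinder:
  assumes "x \<in> edge_shift E s t"
  shows "openin (shift_topology E s t) (cylinder E s t x N)"
proof -
  have "cylinder E s t x N = {u \<in> edge_shift E s t. \<forall>i\<in>{- int N..int N}. u i \<in> {x i}}"
    unfolding cylinder_def by (auto simp: abs_le_iff)
  moreover have "x i \<in> E" for i using assms unfolding edge_shift_iff by simp
  ultimately show ?thesis
    using openin_shift_topology_coordinates[of "{- int N..int N}" "\<lambda>i. {x i}" E s t] by simp
qed

lemma cylinder_subset_openin:
  assumes "openin (shift_topology E s t) U" "x \<in> U"
  obtains N where "cylinder E s t x N \<subseteq> U"
proof -
  obtain U0 where U0: "openin (product_topology (\<lambda>_::int. discrete_topology E) UNIV) U0"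
    "U = U0 \<inter> edge_shift E s t"
    using assms(1) unfolding shift_topology_def openin_subtopology by blast
  then obtain B where B: "finite {i. B i \<noteq> E}" "x \<in> PiE UNIV B" "PiE UNIV B \<subseteq> U0"
    using assms(2) unfolding openin_product_topology_alt by force
  define N where "N = Max (insert 0 (nat ` abs ` {i. B i \<noteq> E}))"
  have N: "\<bar>i\<bar> \<le> int N" if "B i \<noteq> E" for i
  proof -
    have "nat \<bar>i\<bar> \<le> N" unfolding N_def using B(1) that by (intro Max_ge) auto
    then show ?thesis by simp
  qed
  have "u \<in> PiE UNIV B" if "u \<in> cylinder E s t x N" for u
  proof -
    have "u i \<in> B i" for i
    proof (cases "B i = E")
      case True
      then show ?thesis using that unfolding cylinder_def edge_shift_iff by simp
    next
      case False
      then show ?thesis using that N[OF False] B(2) unfolding cylinder_def by (auto simp: PiE_iff)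
    qed
    then show ?thesis by (simp add: PiE_UNIV_domain)
  qed
  then have "cylinder E s t x N \<subseteq> U" using B(3) U0(2) unfolding cylinder_def by blast
  then show thesis by (rule that)
qed

lemma closedin_edge_shift:
  "closedin (product_topology (\<lambda>_::int. discrete_topology E) UNIV) (edge_shift E s t)"
proof -
  let ?P = "product_topology (\<lambda>_::int. discrete_topology E) UNIV"
  have "openin ?P (topspace ?P - edge_shift E s t)"
  proof (subst openin_subopen, intro ballI)
    fix u assume u: "u \<in> topspace ?P - edge_shift E s t"
    then obtain i where i: "t (u i) \<noteq> s (u (i + 1))"
      unfolding edge_shift_def by (auto simp: PiE_UNIV_domain Pi_iff)
    let ?T = "{v \<in> PiE UNIV (\<lambda>_. E). \<forall>j\<in>{i, i + 1}. v j \<in> {u j}}"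
    have "openin ?P ?T"
      by (rule openin_product_discrete_coordinates) (use u in \<open>auto simp: PiE_UNIV_domain Pi_iff\<close>)
    moreover have "u \<in> ?T" using u by auto
    moreover have "?T \<subseteq> topspace ?P - edge_shift E s t" using i by (auto simp: edge_shift_def) metis
    ultimately show "\<exists>T. openin ?P T \<and> u \<in> T \<and> T \<subseteq> topspace ?P - edge_shift E s t" by blast
  qed
  then show ?thesis unfolding closedin_def by (auto simp: edge_shift_def PiE_UNIV_domain Pi_iff)
qed

lemma compact_space_shift_topology:
  assumes "finite E"
  shows "compact_space (shift_topology E s t)"
proof -
  have "compact_space (product_topology (\<lambda>_::int. discrete_topology E) UNIV)"
    using assms by (simp add: compact_space_product_topology compact_space_discrete_topology)
  then have "compactin (product_topology (\<lambda>_::int. discrete_topology E) UNIV) (edge_shift E s t)"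
    using closedin_compact_space closedin_edge_shift by blast
  then show ?thesis unfolding shift_topology_def by (rule compact_space_subtopology)
qed

lemma closedin_edge_shift_subset:
  assumes "S \<subseteq> E"
  shows "closedin (shift_topology E s t) (edge_shift S s t)"
proof -
  have "edge_shift E s t - edge_shift S s t = (\<Union>i. {u \<in> edge_shift E s t. \<forall>j\<in>{i}. u j \<in> E - S})"
    unfolding edge_shift_def by auto
  moreover have "openin (shift_topology E s t) (\<Union>i. {u \<in> edge_shift E s t. \<forall>j\<in>{i}. u j \<in> E - S})"
    by (intro openin_Union) (use openin_shift_topology_coordinates[of "{_}" "\<lambda>_. E - S"] in auto)
  ultimately show ?thesis unfolding closedin_def using edge_shift_mono[OF assms] by simp
qed

section \<open>Alpha-limit sets\<close>

definition alpha_limit :: "(int \<Rightarrow> 'a) topology \<Rightarrow> (int \<Rightarrow> 'a) \<Rightarrow> (int \<Rightarrow> 'a) set" where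
  "alpha_limit T z = {w \<in> topspace T.
     \<forall>U. openin T U \<and> w \<in> U \<longrightarrow> (\<exists>\<^sub>F n in sequentially. shift_by (- int n) z \<in> U)}"

lemma alpha_limitD:
  "w \<in> alpha_limit T z \<Longrightarrow> openin T U \<Longrightarrow> w \<in> U \<Longrightarrow> \<exists>\<^sub>F n in sequentially. shift_by (- int n) z \<in> U"
  unfolding alpha_limit_def by simp

lemma alpha_limit_meets_compactin:
  assumes "compactin T Y" "\<And>n. shift_by (- int n) y \<in> Y"
  shows "alpha_limit T y \<inter> Y \<noteq> {}"
proof
  assume empty: "alpha_limit T y \<inter> Y = {}"
  have "\<exists>U N. openin T U \<and> w \<in> U \<and> (\<forall>n\<ge>N. shift_by (- int n) y \<notin> U)" if "w \<in> Y" for w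
  proof -
    have "w \<in> topspace T" using compactin_subset_topspace[OF assms(1)] that by blast
    moreover have "w \<notin> alpha_limit T y" using empty that by blast
    ultimately obtain U where "openin T U" "w \<in> U" "\<not> (\<exists>\<^sub>F n in sequentially. shift_by (- int n) y \<in> U)"
      unfolding alpha_limit_def by blast
    then show ?thesis unfolding frequently_sequentially by auto
  qed
  then obtain U N where UN: "\<And>w. w \<in> Y \<Longrightarrow> openin T (U w) \<and> w \<in> U w \<and> (\<forall>n\<ge>N w. shift_by (- int n) y \<notin> U w)"
    by metis
  have "\<forall>V\<in>U ` Y. openin T V" "Y \<subseteq> \<Union>(U ` Y)" using UN by blast+
  then obtain \<F> where "finite \<F>" "\<F> \<subseteq> U ` Y" "Y \<subseteq> \<Union>\<F>"
    using assms(1) unfolding compactin_def by meson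
  then obtain W where W: "finite W" "W \<subseteq> Y" "Y \<subseteq> \<Union>(U ` W)"
    using finite_subset_image[of \<F> U Y] by blast
  define M where "M = Max (insert 0 (N ` W))"
  obtain w where w: "w \<in> W" "shift_by (- int M) y \<in> U w" using W(3) assms(2)[of M] by blast
  have "N w \<le> M" unfolding M_def using W(1) w(1) by simp
  then show False using UN[of w] W(2) w by blast
qed

lemma alpha_limit_subset_if_same_past:
  assumes "y \<in> edge_shift E s t" "z \<in> edge_shift E s t" "\<forall>i\<le>0. z i = y i"
  shows "alpha_limit (shift_topology E s t) y \<subseteq> alpha_limit (shift_topology E s t) z"
proof
  let ?T = "shift_topology E s t"
  fix w assume w: "w \<in> alpha_limit ?T y"
  then have wX: "w \<in> edge_shift E s t" unfolding alpha_limit_def by simp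
  have "\<exists>\<^sub>F n in sequentially. shift_by (- int n) z \<in> U" if U: "openin ?T U" "w \<in> U" for U
  proof -
    obtain N where N: "cylinder E s t w N \<subseteq> U" using cylinder_subset_openin[OF U] .
    have "\<exists>\<^sub>F n in sequentially. shift_by (- int n) y \<in> cylinder E s t w N"
      using alpha_limitD[OF w openin_cylinder[OF wX] self_in_cylinder[OF wX]] .
    moreover have "\<forall>\<^sub>F n in sequentially.
        shift_by (- int n) y \<in> cylinder E s t w N \<longrightarrow> shift_by (- int n) z \<in> cylinder E s t w N"
      unfolding eventually_sequentially
    proof (intro exI[of _ N] allI impI)
      fix n assume n: "N \<le> n" and yn: "shift_by (- int n) y \<in> cylinder E s t w N"
      have "z (i - int n) = w i" if "\<bar>i\<bar> \<le> int N" for i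
      proof -
        have "z (i - int n) = y (i - int n)" using assms(3) that n by auto
        also have "\<dots> = w i" using yn that unfolding cylinder_def by (simp add: shift_by_apply)
        finally show ?thesis .
      qed
      then show "shift_by (- int n) z \<in> cylinder E s t w N"
        unfolding cylinder_def using shift_by_in_edge_shift[OF assms(2)] by (simp add: shift_by_apply)
    qed
    ultimately have "\<exists>\<^sub>F n in sequentially. shift_by (- int n) z \<in> cylinder E s t w N"
      by (rule frequently_rev_mp)
    then show ?thesis by (rule frequently_elim1) (use N in blast)
  qed
  then show "w \<in> alpha_limit ?T z" using wX unfolding alpha_limit_def by simp
qed

section \<open>Conjugacies\<close>

lemma conjugacy_image:
  assumes "conjugacy E s t F s' t' \<phi>"
  shows "\<phi> ` edge_shift E s t = edge_shift F s' t'"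
  using homeomorphic_imp_surjective_map assms unfolding conjugacy_def by fastforce

lemma conjugacy_shift_nat:
  assumes "conjugacy E s t F s' t' \<phi>" "x \<in> edge_shift E s t"
  shows "\<phi> (shift_by (int n) x) = shift_by (int n) (\<phi> x)"
proof (induction n)
  case (Suc n)
  have "\<phi> (shift_by (int (Suc n)) x) = \<phi> (shift (shift_by (int n) x))"
    by (simp add: shift_eq_shift_by)
  also have "\<dots> = shift (\<phi> (shift_by (int n) x))"
    using assms shift_by_in_edge_shift[OF assms(2)] unfolding conjugacy_def by simp
  finally show ?case using Suc.IH by (simp add: shift_eq_shift_by)
qed simp

lemma conjugacy_shift_by:
  assumes "conjugacy E s t F s' t' \<phi>" "x \<in> edge_shift E s t"
  shows "\<phi> (shift_by k x) = shift_by k (\<phi> x)"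
proof (cases "0 \<le> k")
  case True
  then show ?thesis using conjugacy_shift_nat[OF assms, of "nat k"] by simp
next
  case False
  define n where "n = nat (- k)"
  have k: "k = - int n" using False unfolding n_def by simp
  have "\<phi> x = \<phi> (shift_by (int n) (shift_by k x))" unfolding k by simp
  also have "\<dots> = shift_by (int n) (\<phi> (shift_by k x))"
    using conjugacy_shift_nat[OF assms(1) shift_by_in_edge_shift[OF assms(2)]] .
  finally show ?thesis unfolding k by simp
qed

lemma conjugacy_inverse:
  assumes "conjugacy E s t F s' t' \<phi>"
  obtains \<psi> where "conjugacy F s' t' E s t \<psi>"
    and "\<And>x. x \<in> edge_shift E s t \<Longrightarrow> \<psi> (\<phi> x) = x"
    and "\<And>y. y \<in> edge_shift F s' t' \<Longrightarrow> \<phi> (\<psi> y) = y"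
proof -
  obtain \<psi> where "homeomorphic_maps (shift_topology E s t) (shift_topology F s' t') \<phi> \<psi>"
    using assms unfolding conjugacy_def homeomorphic_map_maps by blast
  then have hom: "homeomorphic_map (shift_topology F s' t') (shift_topology E s t) \<psi>"
    and inv1: "\<And>x. x \<in> edge_shift E s t \<Longrightarrow> \<psi> (\<phi> x) = x"
    and inv2: "\<And>y. y \<in> edge_shift F s' t' \<Longrightarrow> \<phi> (\<psi> y) = y"
    unfolding homeomorphic_maps_map by simp_all
  have "\<psi> (shift y) = shift (\<psi> y)" if y: "y \<in> edge_shift F s' t'" for y
  proof -
    have "\<psi> y \<in> edge_shift E s t" using homeomorphic_imp_surjective_map[OF hom] y by auto
    then have "\<phi> (shift (\<psi> y)) = shift y"
      using assms inv2[OF y] unfolding conjugacy_def by simp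
    then show ?thesis
      using inv1 shift_by_in_edge_shift[OF \<open>\<psi> y \<in> edge_shift E s t\<close>] by (metis shift_eq_shift_by)
  qed
  then have "conjugacy F s' t' E s t \<psi>" using hom unfolding conjugacy_def by simp
  then show thesis using inv1 inv2 by (rule that)
qed

lemma conjugacy_alpha_limit:
  assumes "conjugacy E s t F s' t' \<phi>" "z \<in> edge_shift E s t"
    and "w \<in> alpha_limit (shift_topology E s t) z"
  shows "\<phi> w \<in> alpha_limit (shift_topology F s' t') (\<phi> z)"
proof -
  have hom: "homeomorphic_map (shift_topology E s t) (shift_topology F s' t') \<phi>"
    using assms(1) unfolding conjugacy_def by simp
  have wX: "w \<in> edge_shift E s t" using assms(3) unfolding alpha_limit_def by simp
  have "\<exists>\<^sub>F n in sequentially. shift_by (- int n) (\<phi> z) \<in> U'"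
    if U': "openin (shift_topology F s' t') U'" "\<phi> w \<in> U'" for U'
  proof -
    let ?U = "{x \<in> edge_shift E s t. \<phi> x \<in> U'}"
    have "openin (shift_topology E s t) ?U"
      using openin_continuous_map_preimage[OF homeomorphic_imp_continuous_map[OF hom] U'(1)] by simp
    moreover have "w \<in> ?U" using wX U'(2) by simp
    ultimately have "\<exists>\<^sub>F n in sequentially. shift_by (- int n) z \<in> ?U"
      by (rule alpha_limitD[OF assms(3)])
    then show ?thesis
      by (rule frequently_elim1) (simp add: conjugacy_shift_by[OF assms(1,2)])
  qed
  moreover have "\<phi> w \<in> edge_shift F s' t'" using conjugacy_image[OF assms(1)] wX by blast
  ultimately show ?thesis unfolding alpha_limit_def by simp
qed

section \<open>Saturated subshifts\<close>

definition saturated_subshift :: "(int \<Rightarrow> 'a) topology \<Rightarrow> (int \<Rightarrow> 'a) set \<Rightarrow> bool" where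
  "saturated_subshift T Y \<longleftrightarrow> Y \<noteq> {} \<and> closedin T Y \<and> (\<forall>k. \<forall>y\<in>Y. shift_by k y \<in> Y) \<and>
     (\<forall>z\<in>topspace T. alpha_limit T z \<inter> Y \<noteq> {} \<longrightarrow> z \<in> Y)"

lemma saturated_subshift_subset: "saturated_subshift T Y \<Longrightarrow> Y \<subseteq> topspace T"
  unfolding saturated_subshift_def using closedin_subset by blast

lemma saturated_subshift_image:
  assumes conj: "conjugacy E s t F s' t' \<phi>" and Y: "saturated_subshift (shift_topology E s t) Y"
  shows "saturated_subshift (shift_topology F s' t') (\<phi> ` Y)"
proof -
  obtain \<psi> where conj': "conjugacy F s' t' E s t \<psi>"
    and inv1: "\<And>x. x \<in> edge_shift E s t \<Longrightarrow> \<psi> (\<phi> x) = x"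
    and inv2: "\<And>y. y \<in> edge_shift F s' t' \<Longrightarrow> \<phi> (\<psi> y) = y"
    using conjugacy_inverse[OF conj] by blast
  have hom: "homeomorphic_map (shift_topology E s t) (shift_topology F s' t') \<phi>"
    using conj unfolding conjugacy_def by simp
  have YX: "Y \<subseteq> edge_shift E s t" using saturated_subshift_subset[OF Y] by simp
  have "closedin (shift_topology F s' t') (\<phi> ` Y)"
    using Y homeomorphic_map_closedness[OF hom] YX unfolding saturated_subshift_def by simp
  moreover have "shift_by k y \<in> \<phi> ` Y" if "y \<in> \<phi> ` Y" for k y
  proof -
    obtain x where x: "x \<in> Y" "y = \<phi> x" using \<open>y \<in> \<phi> ` Y\<close> by blast
    then have "shift_by k y = \<phi> (shift_by k x)" using conjugacy_shift_by[OF conj] YX by auto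
    moreover have "shift_by k x \<in> Y" using Y x(1) unfolding saturated_subshift_def by simp
    ultimately show ?thesis by simp
  qed
  moreover have "z' \<in> \<phi> ` Y"
    if z': "z' \<in> edge_shift F s' t'" and meets: "alpha_limit (shift_topology F s' t') z' \<inter> \<phi> ` Y \<noteq> {}" for z'
  proof -
    obtain w where w: "w \<in> Y" "\<phi> w \<in> alpha_limit (shift_topology F s' t') z'" using meets by blast
    have "\<psi> z' \<in> edge_shift E s t" using conjugacy_image[OF conj'] z' by blast
    moreover have "w \<in> alpha_limit (shift_topology E s t) (\<psi> z')"
      using conjugacy_alpha_limit[OF conj' z' w(2)] inv1 w(1) YX by auto
    ultimately have "\<psi> z' \<in> Y" using Y w(1) unfolding saturated_subshift_def by auto
    then show ?thesis using inv2[OF z'] by (metis image_eqI)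
  qed
  ultimately show ?thesis using Y unfolding saturated_subshift_def by auto
qed

lemma terminal_sub_edges_propagate:
  assumes "fin_digraph V E s t" "no_sinks_sources V E s t" "terminal_component E s t C"
    and z: "z \<in> edge_shift E s t" and "z j \<in> sub_edges E s t C" "j \<le> i"
  shows "z i \<in> sub_edges E s t C"
  using assms(6)
proof (induction i rule: int_ge_induct)
  case base
  show ?case using assms(5) .
next
  case (step i)
  have "z (i + 1) \<in> E" "t (z i) = s (z (i + 1))" using z unfolding edge_shift_iff by simp_all
  moreover from this step.IH have "s (z (i + 1)) \<in> C" unfolding sub_edges_def by simp
  moreover from calculation have "t (z (i + 1)) \<in> C"
    using terminal_component_forward_closed[OF assms(1-3)] edge_relI by metis
  ultimately show ?case unfolding sub_edges_def by simp
qed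

lemma terminal_edge_shift_saturated:
  assumes "fin_digraph V E s t" "no_sinks_sources V E s t" "terminal_component E s t C"
  shows "saturated_subshift (shift_topology E s t) (edge_shift (sub_edges E s t C) s t)"
  unfolding saturated_subshift_def
proof (intro conjI allI ballI impI)
  let ?S = "sub_edges E s t C"
  show "edge_shift ?S s t \<noteq> {}"
    by (rule component_edge_shift_nonempty) (use assms(3) in \<open>simp add: terminal_component_def\<close>)
  show "closedin (shift_topology E s t) (edge_shift ?S s t)"
    by (rule closedin_edge_shift_subset[OF sub_edges_subset])
  show "shift_by k y \<in> edge_shift ?S s t" if "y \<in> edge_shift ?S s t" for k y
    using that by (rule shift_by_in_edge_shift)
  fix z assume z: "z \<in> topspace (shift_topology E s t)"
    and meets: "alpha_limit (shift_topology E s t) z \<inter> edge_shift ?S s t \<noteq> {}"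
  then obtain w where w: "w \<in> alpha_limit (shift_topology E s t) z" "w \<in> edge_shift ?S s t" by auto
  let ?U = "{u \<in> edge_shift E s t. \<forall>j\<in>{0}. u j \<in> ?S}"
  have "openin (shift_topology E s t) ?U"
    by (rule openin_shift_topology_coordinates) (simp_all add: sub_edges_subset)
  moreover have "w \<in> ?U" using w(2) subsetD[OF sub_edge_shift_subset w(2)] by (simp add: edge_shift_iff)
  ultimately have "\<exists>\<^sub>F n in sequentially. shift_by (- int n) z \<in> ?U"
    by (rule alpha_limitD[OF w(1)])
  then have visits: "\<forall>N. \<exists>n\<ge>N. z (- int n) \<in> ?S"
    unfolding frequently_sequentially by (auto simp: shift_by_apply)
  have zX: "z \<in> edge_shift E s t" using z by simp
  have "z i \<in> ?S" for i
  proof -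
    obtain n where "nat (- i) \<le> n" "z (- int n) \<in> ?S" using visits by auto
    then show ?thesis using terminal_sub_edges_propagate[OF assms zX, of "- int n" i] by simp
  qed
  then show "z \<in> edge_shift ?S s t" using zX unfolding edge_shift_iff by simp
qed

lemma edge_shift_past_then_terminal_block:
  assumes "fin_digraph V E s t" "no_sinks_sources V E s t" "terminal_component E s t C"
    and "\<forall>D. terminal_component E s t D \<longrightarrow> D = C"
    and y: "y \<in> edge_shift E s t" and x: "x \<in> edge_shift (sub_edges E s t C) s t"
  obtains z m where "z \<in> edge_shift E s t" "\<forall>i\<le>0. z i = y i" "shift_by m z \<in> cylinder E s t x N"
proof -
  let ?R = "edge_rel E s t"
  have xX: "x \<in> edge_shift E s t" using x sub_edge_shift_subset by blast
  have "t (y 0) \<in> V" using y assms(1) unfolding edge_shift_iff fin_digraph_def by simp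
  then obtain c where c: "c \<in> C" "(t (y 0), c) \<in> ?R\<^sup>*"
    using reaches_unique_terminal_component[OF assms(1,2,4)] by blast
  obtain c0 where C: "C = component_of E s t c0"
    using assms(3) unfolding terminal_component_def is_component_iff by auto
  have "s (x (- int N)) \<in> C" using x unfolding edge_shift_iff sub_edges_def by simp
  then have "(c, s (x (- int N))) \<in> ?R\<^sup>+" using c(1) unfolding C by (intro component_of_trancl)
  then have "(t (y 0), s (shift_by (- int N) x 0)) \<in> ?R\<^sup>*"
    using c(2) by (simp add: shift_by_apply)
  then obtain z k where z: "z \<in> edge_shift E s t" "k \<ge> 0" "\<forall>i\<le>0. z i = y i"
    and future: "\<forall>i\<ge>0. z (i + k + 1) = shift_by (- int N) x i"
    using edge_shift_connect[OF assms(1,2) y shift_by_in_edge_shift[OF xX]] by blast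
  have "z (i + (int N + k + 1)) = x i" if "\<bar>i\<bar> \<le> int N" for i
    using future[rule_format, of "i + int N"] that
    by (simp add: shift_by_apply add.assoc add.commute add.left_commute)
  then have "shift_by (int N + k + 1) z \<in> cylinder E s t x N"
    unfolding cylinder_def using shift_by_in_edge_shift[OF z(1)] by (simp add: shift_by_apply)
  with z(1,3) show thesis by (rule that)
qed

lemma terminal_edge_shift_least:
  assumes "fin_digraph V E s t" "no_sinks_sources V E s t" "terminal_component E s t C"
    and "\<forall>D. terminal_component E s t D \<longrightarrow> D = C"
    and Y: "saturated_subshift (shift_topology E s t) Y"
  shows "edge_shift (sub_edges E s t C) s t \<subseteq> Y"
proof
  fix x assume x: "x \<in> edge_shift (sub_edges E s t C) s t"
  show "x \<in> Y"
  proof (rule ccontr)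
    assume "x \<notin> Y"
    moreover have "x \<in> edge_shift E s t" using x sub_edge_shift_subset by blast
    moreover have "openin (shift_topology E s t) (edge_shift E s t - Y)"
      using Y unfolding saturated_subshift_def closedin_def by simp
    ultimately obtain N where N: "cylinder E s t x N \<subseteq> edge_shift E s t - Y"
      using cylinder_subset_openin by blast
    obtain y where y: "y \<in> Y" using Y unfolding saturated_subshift_def by blast
    have YX: "Y \<subseteq> edge_shift E s t" using saturated_subshift_subset[OF Y] by simp
    obtain z m where z: "z \<in> edge_shift E s t" "\<forall>i\<le>0. z i = y i" "shift_by m z \<in> cylinder E s t x N"
      using edge_shift_past_then_terminal_block[OF assms(1-4) subsetD[OF YX y] x] by blast
    have "compactin (shift_topology E s t) Y"
      using closedin_compact_space compact_space_shift_topology Y assms(1)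
      unfolding saturated_subshift_def fin_digraph_def by blast
    then have "alpha_limit (shift_topology E s t) y \<inter> Y \<noteq> {}"
      using Y y unfolding saturated_subshift_def by (intro alpha_limit_meets_compactin) auto
    then have "alpha_limit (shift_topology E s t) z \<inter> Y \<noteq> {}"
      using alpha_limit_subset_if_same_past[OF subsetD[OF YX y] z(1,2)] by blast
    then have "z \<in> Y" using Y z(1) unfolding saturated_subshift_def by simp
    then have "shift_by m z \<in> Y" using Y unfolding saturated_subshift_def by blast
    then show False using z(3) N by blast
  qed
qed

theorem lemma2p23:
  fixes V :: "'v set" and E :: "'e set" and s t :: "'e \<Rightarrow> 'v"
    and W :: "'w set" and F :: "'f set" and s' t' :: "'f \<Rightarrow> 'w"
    and C :: "'v set" and C' :: "'w set"
    and \<phi> :: "(int \<Rightarrow> 'e) \<Rightarrow> (int \<Rightarrow> 'f)"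
  assumes "fin_digraph V E s t" and "no_sinks_sources V E s t"
    and "fin_digraph W F s' t'" and "no_sinks_sources W F s' t'"
    and "terminal_component E s t C" and "\<forall>D. terminal_component E s t D \<longrightarrow> D = C"
    and "terminal_component F s' t' C'" and "\<forall>D. terminal_component F s' t' D \<longrightarrow> D = C'"
    and "conjugacy E s t F s' t' \<phi>"
  shows "\<phi> ` edge_shift (sub_edges E s t C) s t = edge_shift (sub_edges F s' t' C') s' t'"
proof -
  let ?X\<^sub>C = "edge_shift (sub_edges E s t C) s t" and ?X\<^sub>C' = "edge_shift (sub_edges F s' t' C') s' t'"
  obtain \<psi> where \<psi>: "conjugacy F s' t' E s t \<psi>"
    and "\<And>x. x \<in> edge_shift E s t \<Longrightarrow> \<psi> (\<phi> x) = x"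
    and inv: "\<And>y. y \<in> edge_shift F s' t' \<Longrightarrow> \<phi> (\<psi> y) = y"
    using conjugacy_inverse[OF assms(9)] by blast
  have "?X\<^sub>C' \<subseteq> \<phi> ` ?X\<^sub>C"
    using assms(9) terminal_edge_shift_saturated[OF assms(1,2,5)]
    by (intro terminal_edge_shift_least[OF assms(3,4,7,8)] saturated_subshift_image)
  moreover have "?X\<^sub>C \<subseteq> \<psi> ` ?X\<^sub>C'"
    using \<psi> terminal_edge_shift_saturated[OF assms(3,4,7)]
    by (intro terminal_edge_shift_least[OF assms(1,2,5,6)] saturated_subshift_image)
  then have "\<phi> ` ?X\<^sub>C \<subseteq> \<phi> ` \<psi> ` ?X\<^sub>C'" by (rule image_mono)
  moreover have "\<phi> ` \<psi> ` ?X\<^sub>C' = ?X\<^sub>C'"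
  proof -
    have "\<phi> (\<psi> y) = y" if "y \<in> ?X\<^sub>C'" for y using inv subsetD[OF sub_edge_shift_subset that] .
    then show ?thesis by (simp add: image_image cong: image_cong)
  qed
  ultimately show ?thesis by (intro subset_antisym) simp_all
qed

end
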